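(* Let $(X,d,\mu)$ be a locally doubling metric measure space, let $1\le q<p$ and $0<\tau\le1$. For each $g\in L^p_{\mathrm{loc}}(X)$ there is a Borel function $\widetilde g\in L^{p/q}_{\mathrm{loc}}(X)$ such that for every compact $K\subseteq X$ there exist $C\ge1$ and $R>0$ with $$\frac{1}{\mu(B(x,r))}\int_{B(x,r)}g^q\,d\mu\le C\,\frac{1}{\mu(B(x,\tau r))}\int_{B(x,\tau r)}\widetilde g\,d\mu$$ for every $x\in K$ and every $0<r<R$.
   Context: A metric measure space is a metric space with a Borel measure $\mu$ giving positive finite measure to nonempty open sets (the spaces here are proper: closed balls are compact). It is locally doubling if for every compact $K\subseteq X$ there are $R>0$, $C\ge1$ with $\mu(B(x,2r))\le C\mu(B(x,r))$ for every ball $B(x,r)$ with $x\in K$, $r\le R$. *)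

theory Defs
  imports "HOL-Analysis.Analysis"
begin

text \<open>Metric measure space on a proper metric space (class heine_borel: closed bounded
  sets, in particular closed balls, are compact).\<close>
definition mm_space :: "'a::heine_borel measure \<Rightarrow> bool" where
  "mm_space M \<longleftrightarrow> sets M = sets borel \<and> space M = UNIV \<and>
     (\<forall>x r. 0 < r \<longrightarrow> 0 < emeasure M (ball x r) \<and> emeasure M (ball x r) < \<infinity>)"

definition locally_doubling :: "'a::heine_borel measure \<Rightarrow> bool" where
  "locally_doubling M \<longleftrightarrow>
     (\<forall>K. compact K \<longrightarrow> (\<exists>R>0. \<exists>C\<ge>1. \<forall>x\<in>K. \<forall>r. 0 < r \<and> r \<le> R \<longrightarrow>
        measure M (ball x (2 * r)) \<le> C * measure M (ball x r)))"

definition Lp_loc :: "'a::heine_borel measure \<Rightarrow> real \<Rightarrow> ('a \<Rightarrow> real) \<Rightarrow> bool" where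
  "Lp_loc M p g \<longleftrightarrow> g \<in> borel_measurable M \<and>
     (\<forall>K. compact K \<longrightarrow> (\<integral>\<^sup>+ x. ennreal (\<bar>g x\<bar> powr p) * indicator K x \<partial>M) < \<infinity>)"

definition avg :: "'a measure \<Rightarrow> 'a set \<Rightarrow> ('a \<Rightarrow> real) \<Rightarrow> real" where
  "avg M A f = (1 / measure M A) * (LINT y:A|M. f y)"

end

theory Submission
  imports Defs
begin

text \<open>The witness is the uncentred maximal function of \<open>|g|^q\<close> over balls of radius at most 1.
  For \<open>r < 1\<close> every point of \<open>B(x, \<tau>r)\<close> lies in \<open>B(x, r)\<close>, so the average of \<open>|g|^q\<close>
  over \<open>B(x, r)\<close> is bounded by the maximal function pointwise on \<open>B(x, \<tau>r)\<close>, hence by its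
  average there: the inequality holds with \<open>C = R = 1\<close>.
  The substance is that the maximal function is locally \<open>L^(p/q)\<close>. Near a compact set the
  measure is uniformly doubling at scales \<open>\<le> 1\<close>, and \<open>|g|^q\<close> may be cut off outside a
  neighbourhood of it. The Vitali covering lemma then gives the weak type estimate
  \<open>\<mu>{Mh > t} \<le> (2D/t) \<integral>_{h > t/2} h\<close>, and integrating it against \<open>s t^(s-1) dt\<close>
  (layer cake and Fubini) gives \<open>\<integral> (Mh)^s \<le> C \<integral> h^s\<close> for \<open>s = p/q > 1\<close>.\<close>

lemma finite_Vitali_covering_balls:
  fixes c :: "'i \<Rightarrow> 'a::metric_space" and r :: "'i \<Rightarrow> real"
  assumes "finite I" "\<And>i. i \<in> I \<Longrightarrow> 0 < r i"
  shows "\<exists>J\<subseteq>I. disjoint_family_on (\<lambda>i. ball (c i) (r i)) J \<and>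
    (\<forall>i\<in>I. \<exists>j\<in>J. ball (c i) (r i) \<subseteq> ball (c j) (3 * r j))"
  using assms
proof (induction "card I" arbitrary: I rule: less_induct)
  case less
  show ?case
  proof (cases "I = {}")
    case True
    then show ?thesis by (auto simp: disjoint_family_on_def)
  next
    case False
    have "Max (r ` I) \<in> r ` I"
      using less.prems(1) False by (intro Max_in) auto
    then obtain i0 where i0: "i0 \<in> I" "r i0 = Max (r ` I)"
      by (metis imageE)
    have i0_max: "r i \<le> r i0" if "i \<in> I" for i
      using i0(2) less.prems(1) that by simp
    define I' where "I' = {i\<in>I. disjnt (ball (c i) (r i)) (ball (c i0) (r i0))}"
    have "i0 \<notin> I'"
      using less.prems(2)[OF i0(1)] by (auto simp: I'_def disjnt_def)
    moreover have "I' \<subseteq> I"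
      by (auto simp: I'_def)
    ultimately have "I' \<subset> I"
      using i0(1) by blast
    then have "card I' < card I" "finite I'"
      using less.prems(1) by (auto intro: psubset_card_mono finite_subset)
    then obtain J' where J': "J' \<subseteq> I'" "disjoint_family_on (\<lambda>i. ball (c i) (r i)) J'"
      "\<forall>i\<in>I'. \<exists>j\<in>J'. ball (c i) (r i) \<subseteq> ball (c j) (3 * r j)"
      using less.hyps less.prems(2) by (metis (no_types, lifting) I'_def mem_Collect_eq)
    have "disjoint_family_on (\<lambda>i. ball (c i) (r i)) (insert i0 J')"
      using J'(1,2) unfolding disjoint_family_on_def by (auto simp: I'_def disjnt_def)
    moreover have "\<exists>j\<in>insert i0 J'. ball (c i) (r i) \<subseteq> ball (c j) (3 * r j)" if i: "i \<in> I" for i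
    proof (cases "i \<in> I'")
      case True
      then show ?thesis using J'(3) by blast
    next
      case False
      then obtain w where w: "dist (c i) w < r i" "dist (c i0) w < r i0"
        using i by (auto simp: I'_def disjnt_def)
      have "ball (c i) (r i) \<subseteq> ball (c i0) (3 * r i0)"
      proof
        fix z
        assume "z \<in> ball (c i) (r i)"
        then have "dist (c i0) z < r i0 + r i + r i"
          using w dist_triangle[of "c i0" z w] dist_triangle[of w z "c i"] by (simp add: dist_commute)
        then show "z \<in> ball (c i0) (3 * r i0)"
          using i0_max[OF i] by simp
      qed
      then show ?thesis by blast
    qed
    ultimately show ?thesis
      using J'(1) i0(1) by (intro exI[of _ "insert i0 J'"]) (auto simp: I'_def)
  qed
qed

lemma open_Union_incseq_compact:
  fixes U :: "'a::heine_borel set"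
  assumes "open U"
  obtains K where "incseq K" "\<And>n. compact (K n)" "(\<Union>n. K n) = U"
proof -
  fix a :: 'a
  define K where "K n = cball a (real n) \<inter> (\<Inter>z\<in>-U. - ball z (1 / real (Suc n)))" for n
  have "compact (K n)" for n
    unfolding K_def by (intro compact_Int_closed compact_cball closed_INT) (simp add: closed_Compl)
  moreover have "incseq K"
  proof (rule incseq_SucI)
    fix n
    have "1 / real (Suc (Suc n)) \<le> 1 / real (Suc n)"
      by (simp add: frac_le)
    then have "- ball z (1 / real (Suc n)) \<subseteq> - ball z (1 / real (Suc (Suc n)))" for z
      by auto
    moreover have "cball a (real n) \<subseteq> cball a (real (Suc n))"
      by auto
    ultimately show "K n \<subseteq> K (Suc n)"
      unfolding K_def by blast
  qed
  moreover have "(\<Union>n. K n) = U"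
  proof
    show "(\<Union>n. K n) \<subseteq> U"
    proof
      fix y
      assume "y \<in> (\<Union>n. K n)"
      then obtain n where "y \<in> K n"
        by blast
      show "y \<in> U"
      proof (rule ccontr)
        assume "y \<notin> U"
        then have "y \<in> - ball y (1 / real (Suc n))"
          using \<open>y \<in> K n\<close> unfolding K_def by blast
        then show False
          by simp
      qed
    qed
    show "U \<subseteq> (\<Union>n. K n)"
    proof
      fix y
      assume "y \<in> U"
      then obtain e where e: "0 < e" "ball y e \<subseteq> U"
        using assms open_contains_ball by blast
      obtain n :: nat where n: "dist a y < real n" "1 / e < real n"
        using reals_Archimedean2[of "max (dist a y) (1 / e)"] by auto
      then have "1 / e < real (Suc n)"
        by simp
      then have "1 / real (Suc n) < e"
        using e(1) by (simp add: field_simps)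
      then have "y \<in> K n"
        using n(1) e(2) unfolding K_def by (auto simp: dist_commute subset_iff)
      then show "y \<in> (\<Union>n. K n)"
        by blast
    qed
  qed
  ultimately show ?thesis
    using that by blast
qed

lemma mm_space_sets: "mm_space M \<Longrightarrow> sets M = sets borel"
  and mm_space_space: "mm_space M \<Longrightarrow> space M = UNIV"
  by (simp_all add: mm_space_def)

lemma emeasure_ball_finite:
  assumes "mm_space M"
  shows "emeasure M (ball x r) < \<infinity>"
proof (cases "0 < r")
  case True
  then show ?thesis
    using assms by (simp add: mm_space_def)
qed (simp add: ball_empty)

lemma emeasure_ball_eq:
  "mm_space M \<Longrightarrow> emeasure M (ball x r) = ennreal (measure M (ball x r))"
  using emeasure_ball_finite[of M x r] by (auto intro!: emeasure_eq_ennreal_measure)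

lemma measure_ball_pos:
  assumes "mm_space M" "0 < r"
  shows "0 < measure M (ball x r)"
proof -
  have "0 < emeasure M (ball x r)"
    using assms by (simp add: mm_space_def)
  then show ?thesis
    by (simp add: emeasure_ball_eq[OF assms(1)])
qed

lemma emeasure_bounded_finite:
  assumes "mm_space M" "bounded S"
  shows "emeasure M S < \<infinity>"
proof -
  obtain x e where "S \<subseteq> ball x e"
    using assms(2) bounded_subset_ballD by blast
  then have "emeasure M S \<le> emeasure M (ball x e)"
    using assms(1) by (intro emeasure_mono) (auto simp: mm_space_sets)
  also have "\<dots> < \<infinity>"
    using emeasure_ball_finite[OF assms(1)] .
  finally show ?thesis .
qed

lemma measure_ball_mono:
  assumes "mm_space M" "ball c r \<subseteq> ball c' r'"
  shows "measure M (ball c r) \<le> measure M (ball c' r')"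
  using assms emeasure_ball_finite[OF assms(1)]
  by (intro measure_mono_fmeasurable) (auto simp: fmeasurable_def mm_space_sets)

lemma mm_space_sigma_finite:
  assumes "mm_space M"
  shows "sigma_finite_measure M"
proof
  fix a :: 'a
  let ?A = "range (\<lambda>n. ball a (real n))"
  show "\<exists>A. countable A \<and> A \<subseteq> sets M \<and> \<Union> A = space M \<and> (\<forall>a\<in>A. emeasure M a \<noteq> \<infinity>)"
  proof (intro exI[of _ ?A] conjI ballI)
    show "\<Union> ?A = space M"
      using assms by (auto simp: mm_space_space dist_commute intro: reals_Archimedean2)
    fix B
    assume "B \<in> ?A"
    then obtain n where "B = ball a (real n)"
      by blast
    then show "emeasure M B \<noteq> \<infinity>"
      using emeasure_ball_finite[OF assms, of a "real n"] by simp
  qed (use assms in \<open>auto simp: mm_space_sets\<close>)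
qed

lemma measure_ball_uniform_lower_bound:
  assumes "mm_space M" "compact K" "0 < R"
  obtains m where "0 < m" "\<And>c r. c \<in> K \<Longrightarrow> R \<le> r \<Longrightarrow> m \<le> measure M (ball c r)"
proof -
  have "K \<subseteq> (\<Union>k\<in>K. ball k (R/2))"
  proof
    fix x
    assume "x \<in> K"
    then show "x \<in> (\<Union>k\<in>K. ball k (R/2))"
      using assms(3) by (intro UN_I[of x]) auto
  qed
  then obtain F where F: "F \<subseteq> K" "finite F" "K \<subseteq> (\<Union>k\<in>F. ball k (R/2))"
    by (rule compactE_image[OF assms(2) open_ball])
  define m where "m = Min (insert 1 ((\<lambda>k. measure M (ball k (R/2))) ` F))"
  have "0 < m"
    unfolding m_def using F(2) assms(3)
    by (subst Min_gr_iff) (auto intro!: measure_ball_pos[OF assms(1)])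
  moreover have "m \<le> measure M (ball c r)" if c: "c \<in> K" and r: "R \<le> r" for c r
  proof -
    obtain k where k: "k \<in> F" "dist k c < R/2"
      using F(3) c by auto
    have "m \<le> measure M (ball k (R/2))"
      unfolding m_def using F(2) k(1) by (intro Min_le) auto
    also have "\<dots> \<le> measure M (ball c r)"
    proof (intro measure_ball_mono[OF assms(1)] subsetI)
      fix z
      assume "z \<in> ball k (R/2)"
      then show "z \<in> ball c r"
        using k(2) r dist_triangle[of c z k] by (simp add: dist_commute)
    qed
    finally show ?thesis .
  qed
  ultimately show ?thesis
    using that by blast
qed

lemma locally_doubling_tripling:
  assumes mm: "mm_space M" and "locally_doubling M" "compact K"
  obtains D where "0 < D"
    "\<And>c r. c \<in> K \<Longrightarrow> 0 < r \<Longrightarrow> r \<le> 1 \<Longrightarrow> measure M (ball c (3 * r)) \<le> D * measure M (ball c r)"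
proof -
  obtain R C where RC: "0 < R" "1 \<le> C"
    "\<And>x r. x \<in> K \<Longrightarrow> 0 < r \<Longrightarrow> r \<le> R \<Longrightarrow> measure M (ball x (2 * r)) \<le> C * measure M (ball x r)"
    using assms(2,3) unfolding locally_doubling_def by metis
  obtain a \<rho> where a: "K \<subseteq> cball a \<rho>"
    using compact_imp_bounded[OF assms(3)] bounded_subset_cball by blast
  obtain m where m: "0 < m" "\<And>c r. c \<in> K \<Longrightarrow> R/2 \<le> r \<Longrightarrow> m \<le> measure M (ball c r)"
    using measure_ball_uniform_lower_bound[OF mm assms(3), of "R/2"] RC(1) by auto
  define U where "U = measure M (ball a (\<rho> + 3))"
  have "0 \<le> U"
    by (simp add: U_def)
  have "measure M (ball c (3 * r)) \<le> (C * C + U / m) * measure M (ball c r)"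
    if c: "c \<in> K" and r: "0 < r" "r \<le> 1" for c r
  proof (cases "r \<le> R/2")
    case True
    have "measure M (ball c (3 * r)) \<le> measure M (ball c (2 * (2 * r)))"
      using r by (intro measure_ball_mono[OF mm]) auto
    also have "\<dots> \<le> C * measure M (ball c (2 * r))"
      using RC(3)[OF c, of "2 * r"] True r by simp
    also have "\<dots> \<le> C * (C * measure M (ball c r))"
      using RC(3)[OF c, of r] RC(1,2) True r by (intro mult_left_mono) auto
    also have "\<dots> \<le> (C * C + U / m) * measure M (ball c r)"
      using \<open>0 \<le> U\<close> m(1) measure_ball_pos[OF mm r(1), of c] by (simp add: algebra_simps)
    finally show ?thesis .
  next
    case False
    have "dist a c \<le> \<rho>"
      using a c by auto
    have "measure M (ball c (3 * r)) \<le> U"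
      unfolding U_def
    proof (intro measure_ball_mono[OF mm] subsetI)
      fix z
      assume "z \<in> ball c (3 * r)"
      then show "z \<in> ball a (\<rho> + 3)"
        using \<open>dist a c \<le> \<rho>\<close> r dist_triangle[of a z c] by simp
    qed
    also have "\<dots> = (U / m) * m"
      using m(1) by simp
    also have "\<dots> \<le> (U / m) * measure M (ball c r)"
      using m(2)[OF c, of r] False m(1) \<open>0 \<le> U\<close> by (intro mult_left_mono) auto
    also have "\<dots> \<le> (C * C + U / m) * measure M (ball c r)"
      using measure_ball_pos[OF mm r(1), of c] by (intro mult_right_mono) auto
    finally show ?thesis .
  qed
  moreover have "0 < C * C + U / m"
    using RC(2) m(1) \<open>0 \<le> U\<close> by (simp add: add_pos_nonneg)
  ultimately show ?thesis
    using that by blast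
qed

lemma Lp_loc_abs_powr:
  assumes "Lp_loc M p g" "0 < q"
  shows "Lp_loc M (p / q) (\<lambda>y. \<bar>g y\<bar> powr q)"
proof -
  have [measurable]: "g \<in> borel_measurable M"
    using assms(1) by (simp add: Lp_loc_def)
  have "\<bar>\<bar>g y\<bar> powr q\<bar> powr (p / q) = \<bar>g y\<bar> powr p" for y
    using assms(2) by (simp add: powr_powr)
  moreover have "(\<lambda>y. \<bar>g y\<bar> powr q) \<in> borel_measurable M"
    by measurable
  ultimately show ?thesis
    using assms(1) by (simp add: Lp_loc_def)
qed

lemma Lp_loc_set_integrable:
  assumes mm: "mm_space M" and s: "1 \<le> s" and f: "Lp_loc M s f" and K: "compact K"
  shows "set_integrable M K f"
proof -
  have [measurable]: "f \<in> borel_measurable M" "K \<in> sets M"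
    using f mm K by (simp_all add: Lp_loc_def mm_space_sets borel_compact)
  have "(\<integral>\<^sup>+ y. ennreal (norm (indicator K y *\<^sub>R f y)) \<partial>M) \<le>
    (\<integral>\<^sup>+ y. indicator K y + ennreal (\<bar>f y\<bar> powr s) * indicator K y \<partial>M)"
  proof (rule nn_integral_mono)
    fix y
    have "\<bar>f y\<bar> \<le> 1 + \<bar>f y\<bar> powr s"
    proof (cases "\<bar>f y\<bar> \<le> 1")
      case True
      then show ?thesis
        by (intro add_increasing2) auto
    next
      case False
      then have "\<bar>f y\<bar> powr 1 \<le> \<bar>f y\<bar> powr s"
        using s by (intro powr_mono) auto
      then show ?thesis
        by simp
    qed
    then have "ennreal \<bar>f y\<bar> \<le> ennreal (1 + \<bar>f y\<bar> powr s)"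
      by (rule ennreal_leI)
    also have "\<dots> = 1 + ennreal (\<bar>f y\<bar> powr s)"
      by (simp add: ennreal_plus)
    finally have "ennreal \<bar>f y\<bar> \<le> 1 + ennreal (\<bar>f y\<bar> powr s)" .
    then show "ennreal (norm (indicator K y *\<^sub>R f y)) \<le> indicator K y + ennreal (\<bar>f y\<bar> powr s) * indicator K y"
      by (auto simp: indicator_def)
  qed
  also have "\<dots> = emeasure M K + (\<integral>\<^sup>+ y. ennreal (\<bar>f y\<bar> powr s) * indicator K y \<partial>M)"
    by (subst nn_integral_add) auto
  also have "\<dots> < \<infinity>"
    using emeasure_bounded_finite[OF mm compact_imp_bounded[OF K]] f K by (simp add: Lp_loc_def)
  finally show ?thesis
    unfolding set_integrable_def by (intro integrableI_bounded) auto
qed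

lemma nn_integral_indicator_UN_disjoint:
  fixes f :: "'a \<Rightarrow> ennreal"
  assumes "finite I" "disjoint_family_on A I" "\<And>i. i \<in> I \<Longrightarrow> A i \<in> sets M" "f \<in> borel_measurable M"
  shows "(\<Sum>i\<in>I. \<integral>\<^sup>+ z. f z * indicator (A i) z \<partial>M) = (\<integral>\<^sup>+ z. f z * indicator (\<Union>i\<in>I. A i) z \<partial>M)"
proof -
  have "(\<Sum>i\<in>I. \<integral>\<^sup>+ z. f z * indicator (A i) z \<partial>M) = (\<integral>\<^sup>+ z. (\<Sum>i\<in>I. f z * indicator (A i) z) \<partial>M)"
    using assms(3,4) by (intro nn_integral_sum[symmetric]) auto
  also have "\<dots> = (\<integral>\<^sup>+ z. f z * indicator (\<Union>i\<in>I. A i) z \<partial>M)"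
    by (simp add: indicator_UN_disjoint[OF assms(1,2)] sum_distrib_left)
  finally show ?thesis .
qed

lemma AE_le_imp_le_avg:
  assumes "set_integrable M B f" "B \<in> sets M" "emeasure M B < \<infinity>" "0 < measure M B"
    and "AE y in M. y \<in> B \<longrightarrow> c \<le> f y"
  shows "c \<le> avg M B f"
proof -
  have "set_integrable M B (\<lambda>_. c)"
    using assms(2,3) unfolding set_integrable_def by (intro integrableI_bounded_set_indicator[where B = "\<bar>c\<bar>"]) auto
  have "measure M B * c = (LINT y:B|M. c)"
    using assms(2,3) by (simp add: set_integral_const)
  also have "\<dots> \<le> (LINT y:B|M. f y)"
    using \<open>set_integrable M B (\<lambda>_. c)\<close> assms(1,5) by (rule set_integral_mono_AE)
  finally show ?thesis
    using assms(4) by (simp add: avg_def field_simps)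
qed

section \<open>Power integrals on the half line\<close>

lemma nn_integral_powr_Ioo:
  fixes a e :: real
  assumes "0 \<le> a" "-1 < e"
  shows "(\<integral>\<^sup>+ t. ennreal (t powr e) * indicator {0<..<a} t \<partial>lborel) = ennreal (a powr (e + 1) / (e + 1))"
proof -
  have "((\<lambda>t. t powr e) has_integral (a powr (e + 1) / (e + 1))) {0..a}"
    using assms by (intro has_integral_powr_from_0) auto
  then have "(\<integral>\<^sup>+ t. ennreal (indicator {0..a} t * t powr e) \<partial>lborel) = ennreal (a powr (e + 1) / (e + 1))"
    by (intro nn_integral_has_integral_lebesgue) auto
  moreover have "AE t in lborel. ennreal (t powr e) * indicator {0<..<a} t = ennreal (indicator {0..a} t * t powr e)"
    using AE_lborel_singleton[of 0] AE_lborel_singleton[of a]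
    by eventually_elim (auto simp: indicator_def)
  ultimately show ?thesis
    by (simp add: nn_integral_cong_AE)
qed

definition ennreal_powr :: "ennreal \<Rightarrow> real \<Rightarrow> ennreal" where
  "ennreal_powr a s = (if a = top then top else ennreal (enn2real a powr s))"

lemma ennreal_powr_eq_top_iff [simp]: "ennreal_powr a s = top \<longleftrightarrow> a = top"
  by (simp add: ennreal_powr_def)

lemma borel_measurable_ennreal_powr [measurable (raw)]:
  assumes [measurable]: "f \<in> borel_measurable M"
  shows "(\<lambda>x. ennreal_powr (f x) s) \<in> borel_measurable M"
  unfolding ennreal_powr_def by measurable

lemma ennreal_powr_mono:
  assumes "a \<le> b" "0 \<le> s"
  shows "ennreal_powr a s \<le> ennreal_powr b s"
proof (cases "b = top")
  case False
  then have "a \<noteq> top"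
    using assms(1) by (auto simp: top_unique)
  then show ?thesis
    using False assms by (auto simp: ennreal_powr_def less_top intro!: ennreal_leI powr_mono2 enn2real_mono)
qed (simp add: ennreal_powr_def)

lemma nn_integral_layer_cake_powr:
  assumes s: "0 < s"
  shows "(\<integral>\<^sup>+ t. (if 0 < t \<and> ennreal t < a then ennreal (s * t powr (s - 1)) else 0) \<partial>lborel) =
    ennreal_powr a s"
proof -
  have layers: "(\<integral>\<^sup>+ t. ennreal (s * t powr (s - 1)) * indicator {0<..<b} t \<partial>lborel) = ennreal (b powr s)"
    if "0 \<le> b" for b
  proof -
    have "(\<integral>\<^sup>+ t. ennreal (s * t powr (s - 1)) * indicator {0<..<b} t \<partial>lborel) =
      ennreal s * (\<integral>\<^sup>+ t. ennreal (t powr (s - 1)) * indicator {0<..<b} t \<partial>lborel)"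
      using s by (subst nn_integral_cmult[symmetric]) (auto simp: ennreal_mult mult.assoc)
    also have "\<dots> = ennreal (b powr s)"
      using that s by (simp add: nn_integral_powr_Ioo ennreal_mult[symmetric])
    finally show ?thesis .
  qed
  show ?thesis
  proof (cases a)
    case (real b)
    then have "(\<integral>\<^sup>+ t. (if 0 < t \<and> ennreal t < a then ennreal (s * t powr (s - 1)) else 0) \<partial>lborel) =
      (\<integral>\<^sup>+ t. ennreal (s * t powr (s - 1)) * indicator {0<..<b} t \<partial>lborel)"
      by (intro nn_integral_cong) (auto simp: ennreal_less_iff indicator_def)
    then show ?thesis
      using layers real by (simp add: ennreal_powr_def)
  next
    case top
    have "ennreal (real n) \<le> (\<integral>\<^sup>+ t. (if 0 < t \<and> ennreal t < a then ennreal (s * t powr (s - 1)) else 0) \<partial>lborel)"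
      for n :: nat
    proof -
      have "ennreal (real n) = (\<integral>\<^sup>+ t. ennreal (s * t powr (s - 1)) * indicator {0<..<real n powr (1 / s)} t \<partial>lborel)"
        using s by (simp add: layers powr_powr)
      also have "\<dots> \<le> (\<integral>\<^sup>+ t. (if 0 < t \<and> ennreal t < a then ennreal (s * t powr (s - 1)) else 0) \<partial>lborel)"
        using top by (intro nn_integral_mono) (auto simp: indicator_def)
      finally show ?thesis .
    qed
    then have "(SUP n. of_nat n :: ennreal) \<le>
      (\<integral>\<^sup>+ t. (if 0 < t \<and> ennreal t < a then ennreal (s * t powr (s - 1)) else 0) \<partial>lborel)"
      by (auto intro!: SUP_least simp: ennreal_of_nat_eq_real_of_nat)
    then show ?thesis
      using top by (simp add: ennreal_SUP_of_nat_eq_top ennreal_powr_def top_unique)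
  qed
qed

lemma nn_integral_truncated_powr:
  assumes a: "0 \<le> a" and s: "1 < s" and c: "0 \<le> c"
  shows "(\<integral>\<^sup>+ t. (if 0 < t then ennreal (c * t powr (s - 2) * (if t < 2 * a then a else 0)) else 0) \<partial>lborel) =
    ennreal (c * 2 powr (s - 1) / (s - 1) * a powr s)"
proof -
  have "(\<integral>\<^sup>+ t. (if 0 < t then ennreal (c * t powr (s - 2) * (if t < 2 * a then a else 0)) else 0) \<partial>lborel) =
    (\<integral>\<^sup>+ t. ennreal (c * a) * (ennreal (t powr (s - 2)) * indicator {0<..<2 * a} t) \<partial>lborel)"
    using a c by (intro nn_integral_cong) (auto simp: indicator_def ennreal_mult[symmetric] mult_ac)
  also have "\<dots> = ennreal (c * a) * ennreal ((2 * a) powr (s - 1) / (s - 1))"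
    using a s by (subst nn_integral_cmult) (auto simp: nn_integral_powr_Ioo)
  also have "\<dots> = ennreal (c * 2 powr (s - 1) / (s - 1) * (a * a powr (s - 1)))"
    using a s c by (simp add: ennreal_mult[symmetric] powr_mult field_simps)
  also have "a * a powr (s - 1) = a powr s"
    using a s powr_add[of a 1 "s - 1"] by (cases "a = 0") auto
  finally show ?thesis .
qed

section \<open>The restricted maximal function\<close>

definition ball_average :: "'a::metric_space measure \<Rightarrow> ('a \<Rightarrow> real) \<Rightarrow> 'a \<Rightarrow> real \<Rightarrow> ennreal" where
  "ball_average M u c r =
     (\<integral>\<^sup>+ z. ennreal (u z) * indicator (ball c r) z \<partial>M) * ennreal (1 / measure M (ball c r))"

definition maximal_function :: "'a::metric_space measure \<Rightarrow> ('a \<Rightarrow> real) \<Rightarrow> 'a set \<Rightarrow> 'a \<Rightarrow> ennreal" where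
  "maximal_function M u C y =
     (SUP (c, r) \<in> {(c, r). c \<in> C \<and> 0 < r \<and> r \<le> 1 \<and> y \<in> ball c r}. ball_average M u c r)"

definition heavy_balls :: "'a::metric_space measure \<Rightarrow> ('a \<Rightarrow> real) \<Rightarrow> 'a set \<Rightarrow> real \<Rightarrow> ('a \<times> real) set" where
  "heavy_balls M u C L = {(c, r). c \<in> C \<and> 0 < r \<and> r \<le> 1 \<and>
     ennreal L * emeasure M (ball c r) < (\<integral>\<^sup>+ z. ennreal (u z) * indicator (ball c r) z \<partial>M)}"

lemma ball_average_le_maximal_function:
  "c \<in> C \<Longrightarrow> 0 < r \<Longrightarrow> r \<le> 1 \<Longrightarrow> y \<in> ball c r \<Longrightarrow> ball_average M u c r \<le> maximal_function M u C y"
  unfolding maximal_function_def by (rule SUP_upper2[of "(c, r)"]) auto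

lemma open_maximal_function_greater: "open {y. t < maximal_function M u C y}"
proof -
  have "{y. t < maximal_function M u C y} =
    (\<Union>(c, r) \<in> {(c, r). c \<in> C \<and> 0 < r \<and> r \<le> 1 \<and> t < ball_average M u c r}. ball c r)"
    unfolding maximal_function_def less_SUP_iff by force
  then show ?thesis
    by (simp add: open_UN split_beta)
qed

lemma borel_measurable_maximal_function: "maximal_function M u C \<in> borel_measurable borel"
  by (rule borel_measurableI_greater) (simp add: borel_open open_maximal_function_greater)

lemma mm_space_borel_measurable_maximal_function:
  "mm_space M \<Longrightarrow> maximal_function N u C \<in> borel_measurable M"
  by (simp add: measurable_cong_sets[OF mm_space_sets refl] borel_measurable_maximal_function)

lemma enn2real_ball_average:
  assumes "u \<in> borel_measurable M" "\<And>z. 0 \<le> u z" "ball c r \<in> sets M"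
  shows "enn2real (ball_average M u c r) = avg M (ball c r) u"
proof -
  have "(LINT z:ball c r|M. u z) = enn2real (\<integral>\<^sup>+ z. ennreal (indicator (ball c r) z *\<^sub>R u z) \<partial>M)"
    unfolding set_lebesgue_integral_def using assms by (intro integral_eq_nn_integral) auto
  also have "(\<integral>\<^sup>+ z. ennreal (indicator (ball c r) z *\<^sub>R u z) \<partial>M) =
    (\<integral>\<^sup>+ z. ennreal (u z) * indicator (ball c r) z \<partial>M)"
    by (intro nn_integral_cong) (simp add: indicator_def)
  finally show ?thesis
    by (simp add: ball_average_def avg_def enn2real_mult)
qed

text \<open>The part of \<open>h\<close> below \<open>t/2\<close> contributes at most \<open>t/2\<close> to the average.\<close>

lemma ball_average_greater_truncated:
  assumes mm: "mm_space M" and h[measurable]: "h \<in> borel_measurable M" and "0 < r" "0 \<le> t"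
    and t: "ennreal t < ball_average M h c r"
  shows "ennreal (t / 2) * emeasure M (ball c r) <
    (\<integral>\<^sup>+ z. ennreal (if t / 2 < h z then h z else 0) * indicator (ball c r) z \<partial>M)"
proof -
  have [measurable]: "ball c r \<in> sets M"
    using mm by (simp add: mm_space_sets)
  define m where "m = measure M (ball c r)"
  define I where "I u = (\<integral>\<^sup>+ z. ennreal (u z) * indicator (ball c r) z \<partial>M)" for u :: "_ \<Rightarrow> real"
  define h' where "h' z = (if t / 2 < h z then h z else 0)" for z
  have m: "0 < m" "emeasure M (ball c r) = ennreal m"
    unfolding m_def using measure_ball_pos[OF mm \<open>0 < r\<close>] emeasure_ball_eq[OF mm] by auto
  have "ennreal t * ennreal m < ball_average M h c r * ennreal m"
    using t m(1) by (intro ennreal_mult_strict_right_mono) auto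
  also have "\<dots> = I h"
    using m(1) by (simp add: ball_average_def I_def m_def mult.assoc ennreal_mult[symmetric])
  finally have lower: "ennreal (t / 2) * ennreal m + ennreal (t / 2) * ennreal m < I h"
    using \<open>0 \<le> t\<close> by (simp add: distrib_right[symmetric] ennreal_plus[symmetric])
  have "I h \<le> (\<integral>\<^sup>+ z. ennreal (h' z) * indicator (ball c r) z + ennreal (t / 2) * indicator (ball c r) z \<partial>M)"
    unfolding I_def h'_def
    by (intro nn_integral_mono) (auto simp: indicator_def ennreal_leI add_increasing2)
  also have "\<dots> = I h' + (\<integral>\<^sup>+ z. ennreal (t / 2) * indicator (ball c r) z \<partial>M)"
    unfolding I_def h'_def by (rule nn_integral_add) measurable
  also have "\<dots> = I h' + ennreal (t / 2) * ennreal m"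
    using m(2) by (simp add: nn_integral_cmult_indicator)
  finally have upper: "I h \<le> I h' + ennreal (t / 2) * ennreal m" .
  have "ennreal (t / 2) * ennreal m + ennreal (t / 2) * ennreal m < ennreal (t / 2) * ennreal m + I h'"
    using less_le_trans[OF lower upper] by (metis add.commute)
  moreover have "ennreal (t / 2) * ennreal m \<noteq> \<infinity>"
    using \<open>0 \<le> t\<close> m(1) by (simp add: ennreal_mult[symmetric])
  ultimately show ?thesis
    by (simp add: I_def h'_def m(2) ennreal_add_left_cancel_less)
qed

lemma maximal_function_le_localized:
  assumes "dist a y \<le> \<rho>" and uv: "\<And>z. z \<in> cball a (\<rho> + 2) \<Longrightarrow> u z = v z"
  shows "maximal_function M u UNIV y \<le> maximal_function M v (cball a (\<rho> + 1)) y"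
  unfolding maximal_function_def [of M u]
proof (rule SUP_least, clarify)
  fix c r
  assume r: "0 < r" "r \<le> 1" "y \<in> ball c r"
  then have c: "c \<in> cball a (\<rho> + 1)"
    using assms(1) dist_triangle[of a c y] by (simp add: dist_commute)
  have "(\<integral>\<^sup>+ z. ennreal (u z) * indicator (ball c r) z \<partial>M) = (\<integral>\<^sup>+ z. ennreal (v z) * indicator (ball c r) z \<partial>M)"
  proof (rule nn_integral_cong)
    fix z
    show "ennreal (u z) * indicator (ball c r) z = ennreal (v z) * indicator (ball c r) z"
      using c r(2) dist_triangle[of a z c] uv[of z] by (cases "z \<in> ball c r") (auto simp: dist_commute)
  qed
  then have "ball_average M u c r = ball_average M v c r"
    by (simp add: ball_average_def)
  also have "\<dots> \<le> maximal_function M v (cball a (\<rho> + 1)) y"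
    using c r by (rule ball_average_le_maximal_function)
  finally show "ball_average M u c r \<le> maximal_function M v (cball a (\<rho> + 1)) y" .
qed

section \<open>Maximal inequalities under uniform doubling\<close>

text \<open>Tripling rather than doubling, since the Vitali covering lemma enlarges balls by the factor 3.\<close>

locale ball_tripling =
  fixes M :: "'a::heine_borel measure" and C :: "'a set" and D :: real
  assumes mm_space: "mm_space M"
    and D_pos: "0 < D"
    and tripling: "\<And>c r. c \<in> C \<Longrightarrow> 0 < r \<Longrightarrow> r \<le> 1 \<Longrightarrow>
      measure M (ball c (3 * r)) \<le> D * measure M (ball c r)"
begin

lemma sets_eq [measurable_cong, simp]: "sets M = sets borel"
  using mm_space by (rule mm_space_sets)

lemma ball_sets [measurable]: "ball c r \<in> sets M"
  by simp

lemma measurable_maximal_function [measurable]: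
  "maximal_function M h C \<in> borel_measurable M"
  using mm_space by (rule mm_space_borel_measurable_maximal_function)

lemma emeasure_Union_finite_heavy_balls_le:
  assumes u[measurable]: "u \<in> borel_measurable M" and L: "0 < L"
    and S: "finite S" "S \<subseteq> heavy_balls M u C L"
  shows "emeasure M (\<Union>(c, r)\<in>S. ball c r) \<le> ennreal (D / L) * (\<integral>\<^sup>+ z. ennreal (u z) \<partial>M)"
proof -
  have "\<exists>T\<subseteq>S. disjoint_family_on (\<lambda>p. ball (fst p) (snd p)) T \<and>
    (\<forall>p\<in>S. \<exists>p'\<in>T. ball (fst p) (snd p) \<subseteq> ball (fst p') (3 * snd p'))"
    using S by (intro finite_Vitali_covering_balls) (auto simp: heavy_balls_def)
  then obtain T where T: "T \<subseteq> S" "disjoint_family_on (\<lambda>p. ball (fst p) (snd p)) T"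
    "\<And>p. p \<in> S \<Longrightarrow> \<exists>p'\<in>T. ball (fst p) (snd p) \<subseteq> ball (fst p') (3 * snd p')"
    by auto
  have "finite T"
    using T(1) S(1) by (rule finite_subset)
  have "emeasure M (\<Union>(c, r)\<in>S. ball c r) \<le> emeasure M (\<Union>p\<in>T. ball (fst p) (3 * snd p))"
    using T(3) by (intro emeasure_mono) (fastforce, simp add: borel_open open_UN)
  also have "\<dots> \<le> (\<Sum>p\<in>T. emeasure M (ball (fst p) (3 * snd p)))"
    using \<open>finite T\<close> by (intro emeasure_subadditive_finite) auto
  also have "\<dots> \<le> (\<Sum>p\<in>T. ennreal (D / L) * (\<integral>\<^sup>+ z. ennreal (u z) * indicator (ball (fst p) (snd p)) z \<partial>M))"
  proof (rule sum_mono)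
    fix p
    assume "p \<in> T"
    then obtain c r where p: "p = (c, r)" and c: "c \<in> C" "0 < r" "r \<le> 1"
      and heavy: "ennreal L * emeasure M (ball c r) < (\<integral>\<^sup>+ z. ennreal (u z) * indicator (ball c r) z \<partial>M)"
      using T(1) S(2) by (cases p) (auto simp: heavy_balls_def)
    have "emeasure M (ball c (3 * r)) \<le> ennreal (D * measure M (ball c r))"
      using tripling[OF c] by (simp add: emeasure_ball_eq[OF mm_space] ennreal_leI)
    also have "\<dots> = ennreal (D / L) * (ennreal L * emeasure M (ball c r))"
      using D_pos L by (simp add: emeasure_ball_eq[OF mm_space] ennreal_mult'[symmetric] mult.assoc[symmetric])
    also have "\<dots> \<le> ennreal (D / L) * (\<integral>\<^sup>+ z. ennreal (u z) * indicator (ball c r) z \<partial>M)"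
      using heavy by (intro mult_left_mono) auto
    finally show "emeasure M (ball (fst p) (3 * snd p)) \<le>
      ennreal (D / L) * (\<integral>\<^sup>+ z. ennreal (u z) * indicator (ball (fst p) (snd p)) z \<partial>M)"
      by (simp add: p)
  qed
  also have "\<dots> = ennreal (D / L) *
    (\<integral>\<^sup>+ z. ennreal (u z) * indicator (\<Union>p\<in>T. ball (fst p) (snd p)) z \<partial>M)"
    using \<open>finite T\<close> T(2)
    by (simp add: sum_distrib_left[symmetric] nn_integral_indicator_UN_disjoint)
  also have "\<dots> \<le> ennreal (D / L) * (\<integral>\<^sup>+ z. ennreal (u z) \<partial>M)"
    by (intro mult_left_mono nn_integral_mono) (auto simp: indicator_def)
  finally show ?thesis .
qed

lemma emeasure_Union_heavy_balls_le:
  assumes u: "u \<in> borel_measurable M" and L: "0 < L"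
  shows "emeasure M (\<Union>(c, r)\<in>heavy_balls M u C L. ball c r) \<le> ennreal (D / L) * (\<integral>\<^sup>+ z. ennreal (u z) \<partial>M)"
proof -
  let ?U = "\<Union>(c, r)\<in>heavy_balls M u C L. ball c r"
  have "open ?U"
    by (simp add: open_UN split_beta)
  then obtain K where K: "incseq K" "\<And>n. compact (K n)" "(\<Union>n. K n) = ?U"
    using open_Union_incseq_compact by metis
  have "emeasure M (K n) \<le> ennreal (D / L) * (\<integral>\<^sup>+ z. ennreal (u z) \<partial>M)" for n
  proof -
    have "K n \<subseteq> ?U"
      using K(3) by blast
    then obtain S where S: "S \<subseteq> heavy_balls M u C L" "finite S" "K n \<subseteq> (\<Union>(c, r)\<in>S. ball c r)"
      by (rule compactE_image[OF K(2), rotated]) (auto split: prod.split)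
    have "emeasure M (K n) \<le> emeasure M (\<Union>(c, r)\<in>S. ball c r)"
      using S(3) by (rule emeasure_mono) (simp add: borel_open open_UN split_beta)
    also have "\<dots> \<le> ennreal (D / L) * (\<integral>\<^sup>+ z. ennreal (u z) \<partial>M)"
      using u L S(2,1) by (rule emeasure_Union_finite_heavy_balls_le)
    finally show ?thesis .
  qed
  moreover have "emeasure M ?U = (SUP n. emeasure M (K n))"
  proof -
    have "range K \<subseteq> sets M"
      using K(2) by (auto intro: borel_closed compact_imp_closed)
    from SUP_emeasure_incseq[OF this K(1)] show ?thesis
      unfolding K(3) by simp
  qed
  ultimately show ?thesis
    by (simp add: SUP_least)
qed

lemma emeasure_maximal_function_greater_le:
  assumes h[measurable]: "h \<in> borel_measurable M" and t: "0 < t"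
  shows "emeasure M {y. ennreal t < maximal_function M h C y} \<le>
    ennreal (2 * D / t) * (\<integral>\<^sup>+ z. ennreal (if t / 2 < h z then h z else 0) \<partial>M)"
proof -
  define h' where "h' z = (if t / 2 < h z then h z else 0)" for z
  have [measurable]: "h' \<in> borel_measurable M"
    unfolding h'_def by measurable
  have "{y. ennreal t < maximal_function M h C y} \<subseteq> (\<Union>(c, r)\<in>heavy_balls M h' C (t / 2). ball c r)"
  proof
    fix y
    assume "y \<in> {y. ennreal t < maximal_function M h C y}"
    then obtain c r where cr: "c \<in> C" "0 < r" "r \<le> 1" "y \<in> ball c r" "ennreal t < ball_average M h c r"
      unfolding maximal_function_def less_SUP_iff by auto
    then have "(c, r) \<in> heavy_balls M h' C (t / 2)"
      using ball_average_greater_truncated[OF mm_space h cr(2) _ cr(5)] t by (simp add: heavy_balls_def h'_def)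
    then show "y \<in> (\<Union>(c, r)\<in>heavy_balls M h' C (t / 2). ball c r)"
      using cr(4) by force
  qed
  then have "emeasure M {y. ennreal t < maximal_function M h C y} \<le>
    emeasure M (\<Union>(c, r)\<in>heavy_balls M h' C (t / 2). ball c r)"
    by (rule emeasure_mono) (simp add: borel_open open_UN split_beta)
  also have "\<dots> \<le> ennreal (D / (t / 2)) * (\<integral>\<^sup>+ z. ennreal (h' z) \<partial>M)"
    using t by (intro emeasure_Union_heavy_balls_le) (simp_all add: h'_def)
  also have "D / (t / 2) = 2 * D / t"
    by simp
  finally show ?thesis
    by (simp only: h'_def)
qed

lemma maximal_function_slice_le:
  assumes h[measurable]: "h \<in> borel_measurable M" and "\<And>z. 0 \<le> h z" and s: "0 \<le> s" and t: "0 < t"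
  shows "(\<integral>\<^sup>+ y. (if ennreal t < maximal_function M h C y then ennreal (s * t powr (s - 1)) else 0) \<partial>M) \<le>
    (\<integral>\<^sup>+ z. ennreal (2 * D * s * t powr (s - 2) * (if t < 2 * h z then h z else 0)) \<partial>M)"
proof -
  have "(\<integral>\<^sup>+ y. (if ennreal t < maximal_function M h C y then ennreal (s * t powr (s - 1)) else 0) \<partial>M) =
    ennreal (s * t powr (s - 1)) * emeasure M {y. ennreal t < maximal_function M h C y}"
    by (subst nn_integral_cmult_indicator[symmetric])
      (auto intro!: nn_integral_cong simp: indicator_def borel_open open_maximal_function_greater)
  also have "\<dots> \<le> ennreal (s * t powr (s - 1)) *
    (ennreal (2 * D / t) * (\<integral>\<^sup>+ z. ennreal (if t / 2 < h z then h z else 0) \<partial>M))"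
    using emeasure_maximal_function_greater_le[OF h t] by (rule mult_left_mono) simp
  also have "\<dots> = ennreal (s * t powr (s - 1) * (2 * D / t)) * (\<integral>\<^sup>+ z. ennreal (if t / 2 < h z then h z else 0) \<partial>M)"
  proof -
    have "ennreal (s * t powr (s - 1) * (2 * D / t)) = ennreal (s * t powr (s - 1)) * ennreal (2 * D / t)"
      using s t D_pos by (intro ennreal_mult) auto
    then show ?thesis
      by (simp only: mult.assoc)
  qed
  also have "\<dots> = (\<integral>\<^sup>+ z. ennreal (s * t powr (s - 1) * (2 * D / t)) * ennreal (if t / 2 < h z then h z else 0) \<partial>M)"
    by (rule nn_integral_cmult[symmetric]) measurable
  also have "\<dots> = (\<integral>\<^sup>+ z. ennreal (2 * D * s * t powr (s - 2) * (if t < 2 * h z then h z else 0)) \<partial>M)"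
  proof (rule nn_integral_cong)
    fix z
    have "s * t powr (s - 1) * (2 * D / t) = 2 * D * s * t powr (s - 2)"
      using t powr_add[of t "s - 2" 1] by (simp add: field_simps)
    then show "ennreal (s * t powr (s - 1) * (2 * D / t)) * ennreal (if t / 2 < h z then h z else 0) =
      ennreal (2 * D * s * t powr (s - 2) * (if t < 2 * h z then h z else 0))"
      using s t D_pos \<open>0 \<le> h z\<close> by (auto simp: ennreal_mult[symmetric])
  qed
  finally show ?thesis .
qed

theorem nn_integral_maximal_function_powr_le:
  assumes h[measurable]: "h \<in> borel_measurable M" and h_nonneg: "\<And>z. 0 \<le> h z" and s: "1 < s"
  shows "(\<integral>\<^sup>+ y. ennreal_powr (maximal_function M h C y) s \<partial>M) \<le>
    ennreal (2 powr s * D * s / (s - 1)) * (\<integral>\<^sup>+ z. ennreal (h z powr s) \<partial>M)"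
proof -
  interpret lborel_M: pair_sigma_finite lborel M
    by (simp add: pair_sigma_finite_def sigma_finite_lborel mm_space_sigma_finite[OF mm_space])
  define f where "f t y = (if 0 < t \<and> ennreal t < maximal_function M h C y then ennreal (s * t powr (s - 1)) else 0)"
    for t y
  define k where "k t z = (if 0 < t then ennreal (2 * D * s * t powr (s - 2) * (if t < 2 * h z then h z else 0)) else 0)"
    for t z
  have [measurable]: "case_prod f \<in> borel_measurable (lborel \<Otimes>\<^sub>M M)" "case_prod k \<in> borel_measurable (lborel \<Otimes>\<^sub>M M)"
    unfolding f_def k_def by measurable
  have "(\<integral>\<^sup>+ y. ennreal_powr (maximal_function M h C y) s \<partial>M) = (\<integral>\<^sup>+ y. \<integral>\<^sup>+ t. f t y \<partial>lborel \<partial>M)"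
    using s by (simp add: f_def nn_integral_layer_cake_powr)
  also have "\<dots> = (\<integral>\<^sup>+ t. \<integral>\<^sup>+ y. f t y \<partial>M \<partial>lborel)"
    by (rule lborel_M.Fubini') measurable
  also have "\<dots> \<le> (\<integral>\<^sup>+ t. \<integral>\<^sup>+ z. k t z \<partial>M \<partial>lborel)"
  proof (rule nn_integral_mono)
    fix t :: real
    show "(\<integral>\<^sup>+ y. f t y \<partial>M) \<le> (\<integral>\<^sup>+ z. k t z \<partial>M)"
      using maximal_function_slice_le[OF h h_nonneg, of s t] s by (cases "0 < t") (simp_all add: f_def k_def)
  qed
  also have "\<dots> = (\<integral>\<^sup>+ z. \<integral>\<^sup>+ t. k t z \<partial>lborel \<partial>M)"
    by (rule lborel_M.Fubini'[symmetric]) measurable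
  also have "\<dots> = (\<integral>\<^sup>+ z. ennreal (2 powr s * D * s / (s - 1) * h z powr s) \<partial>M)"
  proof (rule nn_integral_cong)
    fix z
    have "2 * D * s * 2 powr (s - 1) = 2 powr s * D * s"
      using powr_add[of 2 1 "s - 1"] by simp
    then show "(\<integral>\<^sup>+ t. k t z \<partial>lborel) = ennreal (2 powr s * D * s / (s - 1) * h z powr s)"
      using nn_integral_truncated_powr[OF h_nonneg s, of "2 * D * s" z] D_pos s by (simp add: k_def)
  qed
  also have "\<dots> = (\<integral>\<^sup>+ z. ennreal (2 powr s * D * s / (s - 1)) * ennreal (h z powr s) \<partial>M)"
    by (intro nn_integral_cong ennreal_mult'') simp
  also have "\<dots> = ennreal (2 powr s * D * s / (s - 1)) * (\<integral>\<^sup>+ z. ennreal (h z powr s) \<partial>M)"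
    by (rule nn_integral_cmult) measurable
  finally show ?thesis .
qed

end

section \<open>Local integrability of the maximal function\<close>

lemma nn_integral_maximal_function_powr_compact:
  fixes M :: "'a::heine_borel measure"
  assumes mm: "mm_space M" and ld: "locally_doubling M" and s: "1 < s"
    and u: "Lp_loc M s u" "\<And>z. 0 \<le> u z" and K: "compact K"
  shows "(\<integral>\<^sup>+ y. ennreal_powr (maximal_function M u UNIV y) s * indicator K y \<partial>M) < \<infinity>"
proof -
  obtain a \<rho> where a: "K \<subseteq> cball a \<rho>"
    using compact_imp_bounded[OF K] bounded_subset_cball by blast
  define L where "L = cball a (\<rho> + 2)"
  define h where "h z = u z * indicator L z" for z
  obtain D where D: "0 < D" "\<And>c r. c \<in> cball a (\<rho> + 1) \<Longrightarrow> 0 < r \<Longrightarrow> r \<le> 1 \<Longrightarrow>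
      measure M (ball c (3 * r)) \<le> D * measure M (ball c r)"
    using locally_doubling_tripling[OF mm ld compact_cball] by blast
  interpret ball_tripling M "cball a (\<rho> + 1)" D
    using mm D by unfold_locales
  have [measurable]: "u \<in> borel_measurable M" "L \<in> sets M"
    using u(1) by (simp_all add: Lp_loc_def L_def)
  have [measurable]: "h \<in> borel_measurable M"
    unfolding h_def by measurable
  have "(\<integral>\<^sup>+ y. ennreal_powr (maximal_function M u UNIV y) s * indicator K y \<partial>M) \<le>
    (\<integral>\<^sup>+ y. ennreal_powr (maximal_function M h (cball a (\<rho> + 1)) y) s \<partial>M)"
  proof (rule nn_integral_mono)
    fix y
    have "ennreal_powr (maximal_function M u UNIV y) s \<le> ennreal_powr (maximal_function M h (cball a (\<rho> + 1)) y) s"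
      if "y \<in> K"
      using a that s by (intro ennreal_powr_mono maximal_function_le_localized) (auto simp: h_def L_def)
    then show "ennreal_powr (maximal_function M u UNIV y) s * indicator K y \<le>
      ennreal_powr (maximal_function M h (cball a (\<rho> + 1)) y) s"
      by (cases "y \<in> K") auto
  qed
  also have "\<dots> \<le> ennreal (2 powr s * D * s / (s - 1)) * (\<integral>\<^sup>+ z. ennreal (h z powr s) \<partial>M)"
    using u(2) s by (intro nn_integral_maximal_function_powr_le) (auto simp: h_def)
  also have "(\<integral>\<^sup>+ z. ennreal (h z powr s) \<partial>M) = (\<integral>\<^sup>+ z. ennreal (\<bar>u z\<bar> powr s) * indicator L z \<partial>M)"
    using u(2) s by (intro nn_integral_cong) (simp add: h_def indicator_def)
  also have "ennreal (2 powr s * D * s / (s - 1)) * \<dots> < \<infinity>"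
    using u(1) by (simp add: Lp_loc_def L_def ennreal_mult_less_top)
  finally show ?thesis .
qed

text \<open>The witness is \<open>enn2real\<close> of the maximal function, which is 0 where the maximal
  function is infinite; this only happens on a null set.\<close>

lemma AE_maximal_function_finite:
  fixes M :: "'a::heine_borel measure"
  assumes mm: "mm_space M" and ld: "locally_doubling M" and s: "1 < s"
    and u: "Lp_loc M s u" "\<And>z. 0 \<le> u z"
  shows "AE y in M. maximal_function M u UNIV y \<noteq> \<infinity>"
proof -
  fix a :: 'a
  have [measurable]: "u \<in> borel_measurable M" "maximal_function M u UNIV \<in> borel_measurable M"
    "\<And>n. cball a (real n) \<in> sets M"
    using u(1) mm by (simp_all add: Lp_loc_def mm_space_borel_measurable_maximal_function mm_space_sets)
  have "AE y in M. y \<in> cball a (real n) \<longrightarrow> maximal_function M u UNIV y \<noteq> \<infinity>" for n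
  proof -
    have "(\<integral>\<^sup>+ y. ennreal_powr (maximal_function M u UNIV y) s * indicator (cball a (real n)) y \<partial>M) \<noteq> \<infinity>"
      using nn_integral_maximal_function_powr_compact[OF mm ld s u compact_cball] by (simp add: less_top)
    then have "AE y in M. ennreal_powr (maximal_function M u UNIV y) s * indicator (cball a (real n)) y \<noteq> \<infinity>"
      by (rule nn_integral_PInf_AE[rotated]) measurable
    then show ?thesis
      by eventually_elim (auto simp: indicator_def)
  qed
  then have "AE y in M. \<forall>n. y \<in> cball a (real n) \<longrightarrow> maximal_function M u UNIV y \<noteq> \<infinity>"
    by (subst AE_all_countable) blast
  then show ?thesis
  proof eventually_elim
    case (elim y)
    obtain n :: nat where "dist a y \<le> real n"
      using real_arch_simple by blast
    then show ?case
      using elim by auto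
  qed
qed

lemma Lp_loc_maximal_function:
  fixes M :: "'a::heine_borel measure"
  assumes mm: "mm_space M" and ld: "locally_doubling M" and s: "1 < s"
    and u: "Lp_loc M s u" "\<And>z. 0 \<le> u z"
  shows "Lp_loc M s (\<lambda>y. enn2real (maximal_function M u UNIV y))"
  unfolding Lp_loc_def
proof (intro conjI allI impI)
  have "maximal_function M u UNIV \<in> borel_measurable M"
    using mm by (rule mm_space_borel_measurable_maximal_function)
  then show "(\<lambda>y. enn2real (maximal_function M u UNIV y)) \<in> borel_measurable M"
    by measurable
  fix K :: "'a set"
  assume "compact K"
  have "(\<integral>\<^sup>+ y. ennreal (\<bar>enn2real (maximal_function M u UNIV y)\<bar> powr s) * indicator K y \<partial>M) \<le>
    (\<integral>\<^sup>+ y. ennreal_powr (maximal_function M u UNIV y) s * indicator K y \<partial>M)"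
    by (intro nn_integral_mono) (auto simp: ennreal_powr_def indicator_def)
  also have "\<dots> < \<infinity>"
    using mm ld s u \<open>compact K\<close> by (rule nn_integral_maximal_function_powr_compact)
  finally show "(\<integral>\<^sup>+ y. ennreal (\<bar>enn2real (maximal_function M u UNIV y)\<bar> powr s) * indicator K y \<partial>M) < \<infinity>" .
qed

lemma avg_le_avg_maximal_function:
  assumes mm: "mm_space M" and u: "u \<in> borel_measurable M" "\<And>z. 0 \<le> u z"
    and fin: "AE y in M. maximal_function M u UNIV y \<noteq> \<infinity>"
    and Lp: "1 \<le> s" "Lp_loc M s (\<lambda>y. enn2real (maximal_function M u UNIV y))"
    and r: "0 < r'" "r' \<le> r" "r \<le> 1"
  shows "avg M (ball x r) u \<le> avg M (ball x r') (\<lambda>y. enn2real (maximal_function M u UNIV y))"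
proof (rule AE_le_imp_le_avg)
  show "set_integrable M (ball x r') (\<lambda>y. enn2real (maximal_function M u UNIV y))"
    using Lp_loc_set_integrable[OF mm Lp compact_cball[of x r']]
    by (rule set_integrable_subset) (simp_all add: mm_space_sets[OF mm] ball_subset_cball)
  show "AE y in M. y \<in> ball x r' \<longrightarrow> avg M (ball x r) u \<le> enn2real (maximal_function M u UNIV y)"
    using fin
  proof eventually_elim
    case (elim y)
    show ?case
    proof
      assume "y \<in> ball x r'"
      then have "ball_average M u x r \<le> maximal_function M u UNIV y"
        using r by (intro ball_average_le_maximal_function) auto
      then have "enn2real (ball_average M u x r) \<le> enn2real (maximal_function M u UNIV y)"
        using elim by (intro enn2real_mono) (auto simp: less_top)
      then show "avg M (ball x r) u \<le> enn2real (maximal_function M u UNIV y)"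
        using mm u by (simp add: enn2real_ball_average mm_space_sets)
    qed
  qed
qed (use mm r emeasure_ball_finite[OF mm] in \<open>auto simp: mm_space_sets measure_ball_pos\<close>)

theorem lemma3p2:
  fixes M :: "'a::heine_borel measure" and p q \<tau> :: real and g :: "'a \<Rightarrow> real"
  assumes "mm_space M" and "locally_doubling M"
    and "1 \<le> q" and "q < p" and "0 < \<tau>" and "\<tau> \<le> 1"
    and "Lp_loc M p g"
  shows "\<exists>g'. g' \<in> borel_measurable borel \<and> Lp_loc M (p / q) g' \<and>
    (\<forall>K. compact K \<longrightarrow> (\<exists>C\<ge>1. \<exists>R>0. \<forall>x\<in>K. \<forall>r. 0 < r \<and> r < R \<longrightarrow>
       avg M (ball x r) (\<lambda>y. \<bar>g y\<bar> powr q) \<le> C * avg M (ball x (\<tau> * r)) g'))"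
proof -
  define u where "u = (\<lambda>y. \<bar>g y\<bar> powr q)"
  define g' where "g' = (\<lambda>y. enn2real (maximal_function M u UNIV y))"
  have s: "1 < p / q"
    using assms(3,4) by simp
  have u: "Lp_loc M (p / q) u" "\<And>z. 0 \<le> u z"
    using Lp_loc_abs_powr[OF assms(7), of q] assms(3) by (simp_all add: u_def)
  have g': "Lp_loc M (p / q) g'"
    unfolding g'_def using assms(1,2) s u by (rule Lp_loc_maximal_function)
  have "avg M (ball x r) u \<le> avg M (ball x (\<tau> * r)) g'" if "0 < r" "r < 1" for x r
    unfolding g'_def using assms(5,6) that s u(1)
    by (intro avg_le_avg_maximal_function[OF assms(1) _ u(2) AE_maximal_function_finite[OF assms(1,2) s u]
          _ g'[unfolded g'_def]]) (simp_all add: Lp_loc_def mult_le_cancel_right1)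
  then have "\<forall>x\<in>K. \<forall>r. 0 < r \<and> r < 1 \<longrightarrow>
    avg M (ball x r) (\<lambda>y. \<bar>g y\<bar> powr q) \<le> 1 * avg M (ball x (\<tau> * r)) g'" for K :: "'a set"
    by (simp add: u_def)
  moreover have "g' \<in> borel_measurable borel"
    unfolding g'_def by (intro borel_measurable_enn2real borel_measurable_maximal_function)
  ultimately show ?thesis
    using g' by (intro exI[of _ g'] conjI allI impI exI[of _ "1::real"]) auto
qed

end
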